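(* Suppose $(G_n\in\Delta^{n\times n})$ and $E\in\mathbb R_{\ge0}^{\mathbb N\times\mathbb N}$ satisfy $\lim_n\|\pi_nG_n-E\|_1=0$ for some permutations $\pi_n$ of $[n]$ (with $G_n$ zero-padded to an infinite array). Then $(G_n)$ quotient-converges to the grapheur $\mathsf M=\sum_{i,j}E_{i,j}\delta_{(T_i,T_j)}$, where $T_i$ are iid uniform on $[0,1]$.
   Context: $\Delta^{n\times n}$: $n\times n$ matrices with nonnegative entries summing to $1$. $(\pi G)_{i,j}=G_{\pi^{-1}(i),\pi^{-1}(j)}$; $\|\cdot\|_1$ is the entrywise $\ell_1$ norm. For $f:[n]\to[k]$, $(\rho(f)G)_{i,j}=\sum_{v\in f^{-1}(i),u\in f^{-1}(j)}G_{v,u}$; $F_{k,n}$ is a uniformly random map $[n]\to[k]$. For a random probability measure $\mathsf M$ on $[0,1]^2$, $\mathsf G_k[\mathsf M]$ is the random $k\times k$ matrix with entries $\mathsf M(I_i^{(k)}\times I_j^{(k)})$, $I_i^{(k)}=[(i-1)/k,i/k)$. $(G_n)$ quotient-converges to $\mathsf M$ if $\rho(F_{k,n})G_n\to\mathsf G_k[\mathsf M]$ in distribution for every $k$. *)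

theory Defs
  imports "HOL-Probability.Probability" "HOL-Combinatorics.Permutations"
begin

text \<open>Conventions: indices are 0-based, so [n] = {0..<n}. An n x n matrix is a
function nat => nat => real, of which only the entries with both indices < n are
read.\<close>

definition in_simplex :: "nat \<Rightarrow> (nat \<Rightarrow> nat \<Rightarrow> real) \<Rightarrow> bool" where
  "in_simplex n G \<longleftrightarrow>
     (\<forall>i<n. \<forall>j<n. 0 \<le> G i j) \<and> (\<Sum>i<n. \<Sum>j<n. G i j) = 1"

definition perm_pad :: "nat \<Rightarrow> (nat \<Rightarrow> nat) \<Rightarrow> (nat \<Rightarrow> nat \<Rightarrow> real) \<Rightarrow> nat \<Rightarrow> nat \<Rightarrow> real" where
  "perm_pad n \<pi> G i j = (if i < n \<and> j < n then G (inv \<pi> i) (inv \<pi> j) else 0)"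

definition l1_dist :: "(nat \<Rightarrow> nat \<Rightarrow> real) \<Rightarrow> (nat \<Rightarrow> nat \<Rightarrow> real) \<Rightarrow> ennreal" where
  "l1_dist A B = infsum (\<lambda>(i,j). ennreal \<bar>A i j - B i j\<bar>) UNIV"

definition quot :: "nat \<Rightarrow> (nat \<Rightarrow> nat) \<Rightarrow> (nat \<Rightarrow> nat \<Rightarrow> real) \<Rightarrow> nat \<Rightarrow> nat \<Rightarrow> real" where
  "quot n f G a b = (\<Sum>v<n. \<Sum>u<n. if f v = a \<and> f u = b then G v u else 0)"

definition rand_map :: "nat \<Rightarrow> nat \<Rightarrow> (nat \<Rightarrow> nat) pmf" where
  "rand_map k n = pmf_of_set (PiE {..<n} (\<lambda>_. {..<k}))"

definition bin :: "nat \<Rightarrow> nat \<Rightarrow> real set" where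
  "bin k a = {real a / real k ..< real (Suc a) / real k}"

definition Gk :: "nat \<Rightarrow> (real \<times> real) measure \<Rightarrow> nat \<Rightarrow> nat \<Rightarrow> real" where
  "Gk k M a b = (if a < k \<and> b < k then measure M (bin k a \<times> bin k b) else 0)"

definition grapheur :: "(nat \<Rightarrow> nat \<Rightarrow> real) \<Rightarrow> (nat \<Rightarrow> real) \<Rightarrow> (real \<times> real) measure" where
  "grapheur E T = measure_of UNIV (sets borel)
     (\<lambda>A. infsum (\<lambda>(i,j). ennreal (E i j) * indicator A (T i, T j)) UNIV)"

definition iid_unif :: "(nat \<Rightarrow> real) measure" where
  "iid_unif = PiM UNIV (\<lambda>_. uniform_measure lborel {0..1})"

definition conv_in_dist ::
  "(nat \<Rightarrow> 'a measure) \<Rightarrow> (nat \<Rightarrow> 'a \<Rightarrow> 'b::topological_space) \<Rightarrow> 'c measure \<Rightarrow> ('c \<Rightarrow> 'b) \<Rightarrow> bool" where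
  "conv_in_dist Ms Xs M X \<longleftrightarrow>
     (\<forall>h::'b \<Rightarrow> real. continuous_on UNIV h \<longrightarrow> bounded (range h) \<longrightarrow>
        ((\<lambda>n. \<integral>x. h (Xs n x) \<partial>Ms n) \<longlongrightarrow> (\<integral>x. h (X x) \<partial>M)) sequentially)"

definition quot_conv :: "(nat \<Rightarrow> nat \<Rightarrow> nat \<Rightarrow> real) \<Rightarrow> 'c measure \<Rightarrow> ('c \<Rightarrow> (real \<times> real) measure) \<Rightarrow> bool" where
  "quot_conv G P Mr \<longleftrightarrow>
     (\<forall>k\<ge>1. conv_in_dist (\<lambda>n. measure_pmf (rand_map k n)) (\<lambda>n f. quot n f (G n))
                          P (\<lambda>T. Gk k (Mr T)))"

end

theory Submission
  imports Defs
begin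

(*
  Couple the random maps with an iid uniform sequence T: if F v is the index of the bin
  I_a^(k) containing T (pi_n v), then F is uniform on [k]^[n], and rho(F) G_n is the k x k
  matrix collecting the mass of pi_n G_n over the pairs (i, j) with T_i in I_a and T_j in I_b.
  The same binning applied to E gives exactly G_k[M] at T. Binning is 1-Lipschitz for the l1
  distance, so for every fixed T the binned matrices of pi_n G_n converge to G_k[M], and
  dominated convergence yields convergence of the expectations of every bounded continuous
  test function.
*)

lemma tendsto_fun_componentwise:
  fixes f :: "'a \<Rightarrow> 'b \<Rightarrow> 'c::topological_space"
  shows "(f \<longlongrightarrow> l) F \<longleftrightarrow> (\<forall>i. ((\<lambda>x. f x i) \<longlongrightarrow> l i) F)"
  by (simp flip: limitin_canonical_iff euclidean_product_topology add: limitin_componentwise)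

lemma ennreal_infsum:
  fixes f :: "'a \<Rightarrow> real"
  assumes "f summable_on A" and "\<And>x. x \<in> A \<Longrightarrow> 0 \<le> f x"
  shows "ennreal (infsum f A) = infsum (\<lambda>x. ennreal (f x)) A"
proof -
  have "ennreal (infsum f A) = (SUP F\<in>{F. finite F \<and> F \<subseteq> A}. ennreal (sum f F))"
    by (rule infsum_nonneg_is_SUPREMUM_ennreal) (use assms in auto)
  also have "\<dots> = (SUP F\<in>{F. finite F \<and> F \<subseteq> A}. \<Sum>x\<in>F. ennreal (f x))"
    using assms(2) by (intro SUP_cong refl sum_ennreal[symmetric]) auto
  also have "\<dots> = infsum (\<lambda>x. ennreal (f x)) A"
    by (rule nonneg_infsum_complete[symmetric]) simp
  finally show ?thesis .
qed

lemma summable_on_if_infsum_ennreal_finite: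
  fixes f :: "'a \<Rightarrow> real"
  assumes "infsum (\<lambda>x. ennreal (f x)) A \<noteq> \<infinity>" and "\<And>x. x \<in> A \<Longrightarrow> 0 \<le> f x"
  shows "f summable_on A"
proof (rule nonneg_bdd_above_summable_on)
  let ?S = "infsum (\<lambda>x. ennreal (f x)) A"
  show "bdd_above (sum f ` {F. F \<subseteq> A \<and> finite F})"
  proof (rule bdd_aboveI2)
    fix F assume "F \<in> {F. F \<subseteq> A \<and> finite F}"
    then have F: "F \<subseteq> A" "finite F" by auto
    have "ennreal (sum f F) = (\<Sum>x\<in>F. ennreal (f x))"
      using F assms(2) by (intro sum_ennreal[symmetric]) auto
    also have "\<dots> \<le> (SUP F'\<in>{F'. finite F' \<and> F' \<subseteq> A}. \<Sum>x\<in>F'. ennreal (f x))"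
      by (rule SUP_upper) (use F in auto)
    also have "\<dots> = ?S"
      by (rule nonneg_infsum_complete[symmetric]) simp
    finally have "enn2real (ennreal (sum f F)) \<le> enn2real ?S"
      using assms(1) by (intro enn2real_mono) (auto simp: top.not_eq_extremum)
    then show "sum f F \<le> enn2real ?S"
      using F assms(2) by (simp add: subset_iff sum_nonneg)
  qed
qed (use assms in auto)

lemma
  assumes "l1_dist P E \<noteq> \<infinity>"
  shows summable_on_l1_dist: "(\<lambda>(i,j). \<bar>P i j - E i j\<bar>) summable_on UNIV"
    and enn2real_l1_dist: "enn2real (l1_dist P E) = infsum (\<lambda>(i,j). \<bar>P i j - E i j\<bar>) UNIV"
proof -
  let ?f = "\<lambda>(i,j). \<bar>P i j - E i j\<bar>"
  have l1: "l1_dist P E = infsum (\<lambda>x. ennreal (?f x)) UNIV"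
    unfolding l1_dist_def by (simp add: case_prod_unfold)
  show summable: "?f summable_on UNIV"
    using assms unfolding l1 by (rule summable_on_if_infsum_ennreal_finite) auto
  have "l1_dist P E = ennreal (infsum ?f UNIV)"
    unfolding l1 by (rule ennreal_infsum[symmetric, OF summable]) auto
  moreover have "0 \<le> infsum ?f UNIV"
    by (rule infsum_nonneg) auto
  ultimately show "enn2real (l1_dist P E) = infsum ?f UNIV"
    by simp
qed

lemma summable_on_if_l1_dist_finite:
  assumes "(\<lambda>(i,j). P i j) summable_on UNIV" and "l1_dist P E \<noteq> \<infinity>"
  shows "(\<lambda>(i,j). E i j) summable_on UNIV"
proof -
  have "(\<lambda>(i,j). P i j - E i j) summable_on UNIV"
    by (rule abs_summable_summable) (use summable_on_l1_dist[OF assms(2)] in \<open>simp add: case_prod_unfold\<close>)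
  then have "(\<lambda>x. (\<lambda>(i,j). P i j) x + - (\<lambda>(i,j). P i j - E i j) x) summable_on UNIV"
    by (intro summable_on_add assms(1)) (simp add: summable_on_uminus)
  then show ?thesis by (simp add: case_prod_unfold)
qed

lemma summable_on_finite_support:
  fixes P :: "nat \<Rightarrow> nat \<Rightarrow> real"
  assumes "\<And>i j. P i j \<noteq> 0 \<Longrightarrow> i < n \<and> j < n"
  shows "(\<lambda>(i,j). P i j) summable_on UNIV"
proof -
  have "(\<lambda>(i,j). P i j) summable_on {..<n} \<times> {..<n}" by (intro summable_on_finite finite_SigmaI) auto
  then show ?thesis
    by (rule summable_on_cong_neutral[THEN iffD1, rotated -1]) (use assms in auto)
qed

lemma infsum_ennreal_eq_suminf: "infsum (f :: nat \<Rightarrow> ennreal) UNIV = suminf f"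
proof -
  have "(f has_sum infsum f UNIV) UNIV"
    by (intro has_sum_infsum nonneg_summable_on_complete) simp
  then show ?thesis by (intro sums_unique has_sum_imp_sums)
qed

lemma infsum_ennreal_eq_nn_integral:
  "infsum (f :: nat \<times> nat \<Rightarrow> ennreal) UNIV = (\<integral>\<^sup>+ x. f x \<partial>count_space UNIV)"
proof -
  have bij: "bij_betw prod_decode UNIV UNIV"
    using bij_prod_decode by (simp add: bij_def)
  have "infsum f UNIV = infsum (\<lambda>n. f (prod_decode n)) UNIV"
    by (rule infsum_reindex_bij_betw[OF bij, symmetric])
  also have "\<dots> = (\<integral>\<^sup>+ n. f (prod_decode n) \<partial>count_space UNIV)"
    by (simp add: infsum_ennreal_eq_suminf nn_integral_count_space_nat)
  also have "\<dots> = (\<integral>\<^sup>+ x. f x \<partial>count_space UNIV)"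
    by (rule nn_integral_bij_count_space[OF bij])
  finally show ?thesis .
qed

lemma emeasure_grapheur:
  assumes "A \<in> sets borel"
  shows "emeasure (grapheur E T) A = infsum (\<lambda>(i,j). ennreal (E i j) * indicator A (T i, T j)) UNIV"
proof -
  \<comment> \<open>measure_of returns the given set function only if it is countably additive; we get this
    by recognising it as the push-forward of the counting measure on pairs with density E.\<close>
  let ?C = "density (count_space UNIV) (\<lambda>(i,j). ennreal (E i j))"
  define D where "D = distr ?C borel (\<lambda>(i,j). (T i, T j))"
  have emeasure_D: "emeasure D B = infsum (\<lambda>(i,j). ennreal (E i j) * indicator B (T i, T j)) UNIV"
    if B: "B \<in> sets borel" for B :: "(real \<times> real) set"
  proof -
    have "emeasure D B = emeasure ?C ((\<lambda>(i,j). (T i, T j)) -` B)"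
      unfolding D_def by (subst emeasure_distr[OF _ B]) simp_all
    also have "\<dots> = (\<integral>\<^sup>+ x. (\<lambda>(i,j). ennreal (E i j) * indicator B (T i, T j)) x \<partial>count_space UNIV)"
      by (subst emeasure_density) (auto intro!: nn_integral_cong simp: indicator_def)
    finally show ?thesis
      by (simp only: infsum_ennreal_eq_nn_integral)
  qed
  have "space D = UNIV" "sets D = sets borel"
    by (simp_all add: D_def)
  then have "D = measure_of UNIV (sets borel) (emeasure D)"
    using measure_of_of_measure[of D] by (simp only:)
  also have "\<dots> = grapheur E T"
    unfolding grapheur_def
  proof (rule measure_of_eq)
    fix B :: "(real \<times> real) set"
    assume "B \<in> sigma_sets UNIV (sets borel)"
    then have "B \<in> sets borel"
      by (metis sets.sigma_sets_eq space_borel)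
    then show "emeasure D B = infsum (\<lambda>(i,j). ennreal (E i j) * indicator B (T i, T j)) UNIV"
      by (rule emeasure_D)
  qed simp
  finally show ?thesis
    using emeasure_D[OF assms] by (simp only:)
qed

lemma measure_grapheur_Times:
  assumes E_summable: "(\<lambda>(i,j). E i j) summable_on UNIV" and E_nonneg: "\<forall>i j. 0 \<le> E i j"
    and A: "A \<in> sets borel" and B: "B \<in> sets borel"
  shows "measure (grapheur E T) (A \<times> B) =
    infsum (\<lambda>(i,j). E i j * indicator A (T i) * indicator B (T j)) UNIV"
proof -
  let ?f = "\<lambda>(i,j). E i j * indicator A (T i) * indicator B (T j) :: real"
  have f_nonneg: "0 \<le> ?f x" for x
    using E_nonneg by (auto simp: case_prod_beta)
  have f_summable: "?f summable_on UNIV"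
    by (rule summable_on_comparison_test[OF E_summable]) (use E_nonneg in \<open>auto simp: indicator_def\<close>)
  have "A \<times> B \<in> sets borel"
    using A B by (simp flip: borel_prod)
  then have "emeasure (grapheur E T) (A \<times> B) =
      infsum (\<lambda>(i,j). ennreal (E i j) * indicator (A \<times> B) (T i, T j)) UNIV"
    by (rule emeasure_grapheur)
  also have "\<dots> = infsum (\<lambda>x. ennreal (?f x)) UNIV"
    by (intro infsum_cong) (auto simp: indicator_def)
  also have "\<dots> = ennreal (infsum ?f UNIV)"
    using f_nonneg by (intro ennreal_infsum[symmetric] f_summable)
  finally show ?thesis
    using f_nonneg by (simp add: measure_def infsum_nonneg)
qed

definition bin_index :: "nat \<Rightarrow> real \<Rightarrow> nat" where
  "bin_index k t = nat \<lfloor>t * real k\<rfloor>"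

lemma mem_bin_iff:
  assumes "k \<ge> 1" and "t \<in> {0..<1}"
  shows "t \<in> bin k a \<longleftrightarrow> a = bin_index k t"
proof -
  have "t \<in> bin k a \<longleftrightarrow> real a \<le> t * real k \<and> t * real k < real a + 1"
    using assms(1) by (simp add: bin_def divide_le_eq less_divide_eq algebra_simps)
  also have "\<dots> \<longleftrightarrow> \<lfloor>t * real k\<rfloor> = int a"
    by (simp add: floor_eq_iff)
  also have "\<dots> \<longleftrightarrow> a = bin_index k t"
    using assms by (auto simp: bin_index_def)
  finally show ?thesis .
qed

lemma bin_index_less:
  assumes "k \<ge> 1" and "t \<in> {0..<1}"
  shows "bin_index k t < k"
  using assms by (simp add: bin_index_def nat_less_iff floor_less_iff)

lemma sets_borel_bin [measurable]: "bin k a \<in> sets borel"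
  by (simp add: bin_def)

lemma bin_subset_unit_interval:
  assumes "a < k"
  shows "bin k a \<subseteq> {0..1}"
proof
  fix x assume "x \<in> bin k a"
  then have "real a / real k \<le> x" and "x < real (Suc a) / real k"
    by (auto simp: bin_def)
  moreover have "0 \<le> real a / real k" and "real (Suc a) / real k \<le> 1"
    using assms by (simp_all add: divide_le_eq)
  ultimately show "x \<in> {0..1}"
    unfolding atLeastAtMost_iff by linarith
qed

lemma emeasure_uniform_bin:
  assumes "a < k"
  shows "emeasure (uniform_measure lborel {0..1::real}) (bin k a) = ennreal (1 / real k)"
proof -
  have "emeasure (uniform_measure lborel {0..1::real}) (bin k a) = emeasure lborel (bin k a)"
    using bin_subset_unit_interval[OF assms]
    by (subst emeasure_uniform_measure) (auto simp: bin_def Int_absorb1 divide_ennreal_def)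
  also have "\<dots> = ennreal (real (Suc a) / real k - real a / real k)"
    unfolding bin_def using assms by (intro emeasure_lborel_Ico) (simp add: divide_right_mono)
  finally show ?thesis
    by (simp add: diff_divide_distrib[symmetric])
qed

lemma product_prob_space_uniform:
  "product_prob_space (\<lambda>_::nat. uniform_measure lborel {0..1::real})"
  by (intro product_prob_spaceI prob_space_uniform_measure) auto

lemma prob_space_iid_unif: "prob_space iid_unif"
  unfolding iid_unif_def by (intro prob_space_PiM prob_space_uniform_measure) auto

lemma space_iid_unif: "space iid_unif = UNIV"
  by (simp add: iid_unif_def space_PiM)

lemma AE_iid_unif_in_unit_interval: "AE T in iid_unif. \<forall>i. T i \<in> {0..<1}"
proof -
  have "AE t in uniform_measure lborel {0..1::real}. t \<in> {0..<1}"
    by (rule AE_uniform_measureI) (auto intro: eventually_mono[OF AE_lborel_singleton[of 1]])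
  then show ?thesis
    unfolding AE_all_countable iid_unif_def
    using product_prob_space.AE_component[OF product_prob_space_uniform] by auto
qed

lemma measure_iid_unif_bins:
  assumes "finite I" and "\<And>i. i \<in> I \<Longrightarrow> c i < k"
  shows "measure iid_unif {T \<in> space iid_unif. \<forall>i\<in>I. T i \<in> bin k (c i)} = (1 / real k) ^ card I"
proof -
  have "emeasure iid_unif {T \<in> space iid_unif. \<forall>i\<in>I. T i \<in> bin k (c i)} =
      (\<Prod>i\<in>I. emeasure (uniform_measure lborel {0..1}) (bin k (c i)))"
    unfolding iid_unif_def
    by (rule product_prob_space.emeasure_PiM_Collect[OF product_prob_space_uniform])
       (use assms(1) in \<open>auto simp: bin_def\<close>)
  also have "\<dots> = (\<Prod>i\<in>I. ennreal (1 / real k))"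
    using assms(2) by (intro prod.cong refl emeasure_uniform_bin)
  also have "\<dots> = ennreal ((1 / real k) ^ card I)"
    by (simp add: ennreal_power)
  finally show ?thesis
    by (simp add: measure_def)
qed

definition binned :: "nat \<Rightarrow> (nat \<Rightarrow> nat \<Rightarrow> real) \<Rightarrow> (nat \<Rightarrow> real) \<Rightarrow> nat \<Rightarrow> nat \<Rightarrow> real" where
  "binned k P T a b = (if a < k \<and> b < k then
     infsum (\<lambda>(i,j). P i j * indicator (bin k a) (T i) * indicator (bin k b) (T j)) UNIV else 0)"

lemma Gk_grapheur:
  assumes "(\<lambda>(i,j). E i j) summable_on UNIV" and "\<forall>i j. 0 \<le> E i j"
  shows "Gk k (grapheur E T) = binned k E T"
  by (intro ext) (simp add: Gk_def binned_def measure_grapheur_Times[OF assms] bin_def)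

lemma binned_eq_sum:
  fixes P :: "nat \<Rightarrow> nat \<Rightarrow> real"
  assumes "\<And>i j. P i j \<noteq> 0 \<Longrightarrow> i < n \<and> j < n"
  shows "binned k P T a b = (if a < k \<and> b < k then
    \<Sum>i<n. \<Sum>j<n. P i j * indicator (bin k a) (T i) * indicator (bin k b) (T j) else 0)"
proof -
  let ?f = "\<lambda>(i,j). P i j * indicator (bin k a) (T i) * indicator (bin k b) (T j) :: real"
  have "infsum ?f UNIV = infsum ?f ({..<n} \<times> {..<n})"
    by (rule infsum_cong_neutral) (use assms in fastforce)+
  also have "\<dots> = (\<Sum>(i,j)\<in>{..<n} \<times> {..<n}. P i j * indicator (bin k a) (T i) * indicator (bin k b) (T j))"
    by (simp only: infsum_finite finite_cartesian_product finite_lessThan)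
  also have "\<dots> = (\<Sum>i<n. \<Sum>j<n. P i j * indicator (bin k a) (T i) * indicator (bin k b) (T j))"
    by (rule sum.cartesian_product[symmetric])
  finally show ?thesis
    by (simp add: binned_def)
qed

lemma borel_measurable_binned:
  fixes P :: "nat \<Rightarrow> nat \<Rightarrow> real"
  assumes "\<And>i j. P i j \<noteq> 0 \<Longrightarrow> i < n \<and> j < n"
  shows "binned k P \<in> borel_measurable iid_unif"
proof (rule measurable_coordinatewise_then_product)
  fix a
  show "(\<lambda>T. binned k P T a) \<in> borel_measurable iid_unif"
  proof (rule measurable_coordinatewise_then_product)
    fix b
    show "(\<lambda>T. binned k P T a b) \<in> borel_measurable iid_unif"
      unfolding iid_unif_def by (subst binned_eq_sum[OF assms]) measurable
  qed
qed

lemma perm_pad_support: "perm_pad n \<sigma> G i j \<noteq> 0 \<Longrightarrow> i < n \<and> j < n"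
  by (simp add: perm_pad_def split: if_splits)

lemma quot_restrict: "quot n (restrict f {..<n}) G = quot n f G"
  unfolding quot_def by (intro ext sum.cong) auto

lemma binned_perm_pad:
  assumes \<sigma>: "\<sigma> permutes {..<n}" and k: "k \<ge> 1" and T: "\<forall>i. T i \<in> {0..<1}"
  shows "binned k (perm_pad n \<sigma> G) T = quot n (\<lambda>v. bin_index k (T (\<sigma> v))) G"
proof (intro ext)
  fix a b
  let ?f = "\<lambda>v. bin_index k (T (\<sigma> v))"
  show "binned k (perm_pad n \<sigma> G) T a b = quot n ?f G a b"
  proof (cases "a < k \<and> b < k")
    case ab: True
    have ind: "indicator (bin k c) (T i) = (if bin_index k (T i) = c then 1 else (0::real))" for c i
      using mem_bin_iff[OF k] T by (auto simp: indicator_def)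
    have inv_\<sigma>: "bij_betw (inv \<sigma>) {..<n} {..<n}"
      by (rule permutes_imp_bij[OF permutes_inv[OF \<sigma>]])
    have "binned k (perm_pad n \<sigma> G) T a b = (\<Sum>i<n. \<Sum>j<n.
        perm_pad n \<sigma> G i j * indicator (bin k a) (T i) * indicator (bin k b) (T j))"
      using ab by (simp only: binned_eq_sum[OF perm_pad_support] simp_thms if_True)
    also have "\<dots> = (\<Sum>i<n. \<Sum>j<n.
        if ?f (inv \<sigma> i) = a \<and> ?f (inv \<sigma> j) = b then G (inv \<sigma> i) (inv \<sigma> j) else 0)"
      by (intro sum.cong refl) (simp add: ind perm_pad_def permutes_inverses(1)[OF \<sigma>])
    also have "\<dots> = (\<Sum>i<n. \<Sum>u<n. if ?f (inv \<sigma> i) = a \<and> ?f u = b then G (inv \<sigma> i) u else 0)"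
      by (intro sum.cong refl sum.reindex_bij_betw[OF inv_\<sigma>])
    also have "\<dots> = (\<Sum>v<n. \<Sum>u<n. if ?f v = a \<and> ?f u = b then G v u else 0)"
      by (rule sum.reindex_bij_betw[OF inv_\<sigma>])
    finally show ?thesis
      by (simp add: quot_def)
  next
    case False
    have "?f v < k" for v
      using bin_index_less[OF k] T by blast
    then show ?thesis
      using False by (auto simp: binned_def quot_def intro!: sum.neutral)
  qed
qed

lemma bin_cell_iff:
  assumes \<sigma>: "\<sigma> permutes {..<n}" and k: "k \<ge> 1" and T: "\<forall>i. T i \<in> {0..<1}"
    and f: "f \<in> PiE {..<n} (\<lambda>_. {..<k})"
  shows "(\<forall>i\<in>{..<n}. T i \<in> bin k (f (inv \<sigma> i))) \<longleftrightarrow> f = restrict (\<lambda>v. bin_index k (T (\<sigma> v))) {..<n}"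
proof -
  have "(\<forall>i\<in>{..<n}. T i \<in> bin k (f (inv \<sigma> i))) \<longleftrightarrow> (\<forall>i\<in>{..<n}. f (inv \<sigma> i) = bin_index k (T i))"
    using T by (simp add: mem_bin_iff[OF k])
  also have "\<dots> \<longleftrightarrow> (\<forall>v\<in>{..<n}. f v = bin_index k (T (\<sigma> v)))"
    using permutes_in_image[OF \<sigma>] permutes_in_image[OF permutes_inv[OF \<sigma>]]
      permutes_inverses[OF \<sigma>] by (metis lessThan_iff)
  also have "\<dots> \<longleftrightarrow> f = restrict (\<lambda>v. bin_index k (T (\<sigma> v))) {..<n}"
    using f by (auto simp: PiE_def extensional_def)
  finally show ?thesis .
qed

lemma sum_bin_cells_indicator:
  fixes g :: "(nat \<Rightarrow> nat) \<Rightarrow> real"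
  assumes \<sigma>: "\<sigma> permutes {..<n}" and k: "k \<ge> 1" and T: "\<forall>i. T i \<in> {0..<1}"
  shows "(\<Sum>f\<in>PiE {..<n} (\<lambda>_. {..<k}).
      g f * indicator {T \<in> space iid_unif. \<forall>i\<in>{..<n}. T i \<in> bin k (f (inv \<sigma> i))} T) =
    g (restrict (\<lambda>v. bin_index k (T (\<sigma> v))) {..<n})"
proof -
  let ?PS = "PiE {..<n} (\<lambda>_. {..<k})" and ?f\<^sub>T = "restrict (\<lambda>v. bin_index k (T (\<sigma> v))) {..<n}"
  have "?f\<^sub>T \<in> ?PS"
    using bin_index_less[OF k] T by auto
  have "T \<in> {T \<in> space iid_unif. \<forall>i\<in>{..<n}. T i \<in> bin k (f (inv \<sigma> i))} \<longleftrightarrow> f = ?f\<^sub>T"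
    if "f \<in> ?PS" for f
    using bin_cell_iff[OF \<sigma> k T that] by (simp add: space_iid_unif)
  then have "(\<Sum>f\<in>?PS. g f * indicator {T \<in> space iid_unif. \<forall>i\<in>{..<n}. T i \<in> bin k (f (inv \<sigma> i))} T) =
      (\<Sum>f\<in>?PS. if f = ?f\<^sub>T then g f else 0)"
    by (intro sum.cong refl) (simp add: indicator_def)
  also have "\<dots> = g ?f\<^sub>T"
    using \<open>?f\<^sub>T \<in> ?PS\<close> by (simp add: finite_PiE)
  finally show ?thesis .
qed

lemma integral_rand_map_quot:
  fixes H :: "(nat \<Rightarrow> nat \<Rightarrow> real) \<Rightarrow> real"
  assumes k: "k \<ge> 1" and \<sigma>: "\<sigma> permutes {..<n}" and H: "H \<in> borel_measurable borel"
  shows "(\<integral>f. H (quot n f G) \<partial>rand_map k n) = (\<integral>T. H (binned k (perm_pad n \<sigma> G) T) \<partial>iid_unif)"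
proof -
  interpret prob_space iid_unif
    by (rule prob_space_iid_unif)
  define PS where "PS = PiE {..<n} (\<lambda>_. {..<k})"
  \<comment> \<open>C f is the event that the bin indices of T realise the map f; these events have
    probability k^-n each and almost surely exactly one of them occurs.\<close>
  define C where "C f = {T \<in> space iid_unif. \<forall>i\<in>{..<n}. T i \<in> bin k (f (inv \<sigma> i))}" for f
  have PS: "finite PS" "PS \<noteq> {}" "card PS = k ^ n"
    using k by (auto simp: PS_def finite_PiE card_PiE PiE_eq_empty_iff lessThan_empty_iff)
  have C_sets: "C f \<in> sets iid_unif" for f
    unfolding C_def iid_unif_def by measurable
  have measure_C: "measure iid_unif (C f) = (1 / real k) ^ n" if "f \<in> PS" for f
  proof -
    have "f (inv \<sigma> i) < k" if "i < n" for i
      using \<open>f \<in> PS\<close> permutes_in_image[OF permutes_inv[OF \<sigma>]] that by (auto simp: PS_def)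
    then show ?thesis
      unfolding C_def by (subst measure_iid_unif_bins) auto
  qed
  have AE_eq: "AE T in iid_unif. H (binned k (perm_pad n \<sigma> G) T) = (\<Sum>f\<in>PS. H (quot n f G) * indicator (C f) T)"
    using AE_iid_unif_in_unit_interval
    by eventually_elim
       (simp add: PS_def C_def sum_bin_cells_indicator[OF \<sigma> k] quot_restrict binned_perm_pad[OF \<sigma> k])
  have "(\<integral>T. H (binned k (perm_pad n \<sigma> G) T) \<partial>iid_unif) =
      (\<integral>T. (\<Sum>f\<in>PS. H (quot n f G) * indicator (C f) T) \<partial>iid_unif)"
  proof (rule integral_cong_AE[OF _ _ AE_eq])
    have "binned k (perm_pad n \<sigma> G) \<in> borel_measurable iid_unif"
      by (rule borel_measurable_binned) (rule perm_pad_support)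
    then show "(\<lambda>T. H (binned k (perm_pad n \<sigma> G) T)) \<in> borel_measurable iid_unif"
      using H by measurable
    show "(\<lambda>T. \<Sum>f\<in>PS. H (quot n f G) * indicator (C f) T) \<in> borel_measurable iid_unif"
      using C_sets by measurable
  qed
  also have "\<dots> = (\<Sum>f\<in>PS. H (quot n f G) * measure iid_unif (C f))"
    using C_sets emeasure_finite by (simp add: integral_sum less_top[symmetric] space_iid_unif)
  also have "\<dots> = (\<Sum>f\<in>PS. H (quot n f G)) / card PS"
    using PS by (simp add: measure_C sum_distrib_right[symmetric] power_one_over divide_inverse power_inverse)
  also have "\<dots> = (\<integral>f. H (quot n f G) \<partial>rand_map k n)"
    unfolding rand_map_def PS_def[symmetric] by (rule integral_pmf_of_set[OF PS(2,1), symmetric])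
  finally show ?thesis ..
qed

lemma abs_binned_diff_le:
  assumes P: "(\<lambda>(i,j). P i j) summable_on UNIV" and E: "(\<lambda>(i,j). E i j) summable_on UNIV"
  shows "\<bar>binned k P T a b - binned k E T a b\<bar> \<le> infsum (\<lambda>(i,j). \<bar>P i j - E i j\<bar>) UNIV"
proof (cases "a < k \<and> b < k")
  case False
  have "0 \<le> infsum (\<lambda>(i,j). \<bar>P i j - E i j\<bar>) UNIV"
    by (rule infsum_nonneg) auto
  then show ?thesis
    unfolding binned_def if_not_P[OF False] by simp
next
  case True
  define w where "w = (\<lambda>(i,j). indicator (bin k a) (T i) * indicator (bin k b) (T j) :: real)"
  define d where "d = (\<lambda>(i,j). P i j - E i j)"
  have w_le_1: "\<bar>w x\<bar> \<le> 1" for x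
    by (auto simp: w_def indicator_def split: prod.split)
  have weighted: "(\<lambda>x. (\<lambda>(i,j). Q i j) x * w x) summable_on UNIV"
    if "(\<lambda>(i,j). Q i j) summable_on UNIV" for Q :: "nat \<Rightarrow> nat \<Rightarrow> real"
  proof -
    have "(\<lambda>x. norm ((\<lambda>(i,j). Q i j) x)) summable_on UNIV"
      using that summable_on_iff_abs_summable_on_real by blast
    then have "(\<lambda>x. norm ((\<lambda>(i,j). Q i j) x * w x)) summable_on UNIV"
      by (rule Infinite_Sum.abs_summable_on_comparison_test'[where f="\<lambda>x. (\<lambda>(i,j). Q i j) x * w x"])
         (use w_le_1 in \<open>simp add: abs_mult mult_left_le\<close>)
    then show ?thesis
      by (rule abs_summable_summable)
  qed
  have "(\<lambda>x. (\<lambda>(i,j). P i j) x + - (\<lambda>(i,j). E i j) x) summable_on UNIV"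
    by (intro summable_on_add P) (simp add: summable_on_uminus E)
  then have d_abs_summable: "(\<lambda>x. \<bar>d x\<bar>) summable_on UNIV"
    using summable_on_iff_abs_summable_on_real by (force simp: d_def case_prod_unfold)
  have dw_le: "\<bar>d x * w x\<bar> \<le> \<bar>d x\<bar>" for x
    using w_le_1 by (simp add: abs_mult mult_left_le)
  have dw_abs_summable: "(\<lambda>x. \<bar>d x * w x\<bar>) summable_on UNIV"
    using Infinite_Sum.abs_summable_on_comparison_test'[OF d_abs_summable, of "\<lambda>x. d x * w x"] dw_le
    by simp
  have "binned k P T a b - binned k E T a b =
      infsum (\<lambda>x. (\<lambda>(i,j). P i j) x * w x) UNIV + infsum (\<lambda>x. - ((\<lambda>(i,j). E i j) x * w x)) UNIV"
    using True by (simp add: binned_def w_def infsum_uminus case_prod_unfold mult.assoc)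
  also have "\<dots> = infsum (\<lambda>x. (\<lambda>(i,j). P i j) x * w x + - ((\<lambda>(i,j). E i j) x * w x)) UNIV"
    by (rule infsum_add[symmetric]) (simp_all add: weighted P E summable_on_uminus)
  also have "\<dots> = infsum (\<lambda>x. d x * w x) UNIV"
    by (simp add: d_def case_prod_beta algebra_simps)
  also have "\<bar>\<dots>\<bar> \<le> infsum (\<lambda>x. \<bar>d x * w x\<bar>) UNIV"
    using norm_infsum_bound[of "\<lambda>x. d x * w x" UNIV] dw_abs_summable by simp
  also have "\<dots> \<le> infsum (\<lambda>x. \<bar>d x\<bar>) UNIV"
    by (rule infsum_mono[OF dw_abs_summable d_abs_summable dw_le])
  finally show ?thesis
    by (simp add: d_def case_prod_unfold)
qed

lemma eventually_l1_dist_finite: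
  assumes "(\<lambda>n. l1_dist (P n) E) \<longlonglongrightarrow> 0"
  shows "\<forall>\<^sub>F n in sequentially. l1_dist (P n) E \<noteq> \<infinity>"
proof -
  have "\<forall>\<^sub>F n in sequentially. l1_dist (P n) E < 1"
    using assms by (rule order_tendstoD) simp
  then show ?thesis
    by eventually_elim (auto simp: top_unique)
qed

lemma tendsto_binned:
  assumes l1: "(\<lambda>n. l1_dist (P n) E) \<longlonglongrightarrow> 0"
    and P: "\<And>n. (\<lambda>(i,j). P n i j) summable_on UNIV" and E: "(\<lambda>(i,j). E i j) summable_on UNIV"
  shows "(\<lambda>n. binned k (P n) T) \<longlonglongrightarrow> binned k E T"
proof -
  have "(\<lambda>n. binned k (P n) T a b) \<longlonglongrightarrow> binned k E T a b" for a b
  proof (rule tendsto_dist_iff[THEN iffD2], rule Lim_null_comparison)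
    show "\<forall>\<^sub>F n in sequentially. norm (dist (binned k (P n) T a b) (binned k E T a b)) \<le> enn2real (l1_dist (P n) E)"
      using eventually_l1_dist_finite[OF l1]
      by eventually_elim (simp add: dist_real_def abs_binned_diff_le[OF P E] enn2real_l1_dist)
    show "(\<lambda>n. enn2real (l1_dist (P n) E)) \<longlonglongrightarrow> 0"
      by (rule tendsto_enn2real) (use l1 in simp_all)
  qed
  then show ?thesis
    by (simp add: tendsto_fun_componentwise)
qed

lemma conv_in_dist_of_pointwise:
  fixes Xs :: "nat \<Rightarrow> 'a \<Rightarrow> 'b::topological_space"
  assumes M: "prob_space M" and Xs: "\<And>n. Xs n \<in> borel_measurable M"
    and lim: "\<And>x. (\<lambda>n. Xs n x) \<longlonglongrightarrow> X x"
  shows "conv_in_dist (\<lambda>_. M) Xs M X"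
  unfolding conv_in_dist_def
proof (intro allI impI)
  interpret prob_space M
    by (rule M)
  fix h :: "'b \<Rightarrow> real"
  assume h: "continuous_on UNIV h" and "bounded (range h)"
  then obtain B where B: "\<And>y. \<bar>h y\<bar> \<le> B"
    by (auto simp: bounded_iff)
  have h_lim: "(\<lambda>n. h (Xs n x)) \<longlonglongrightarrow> h (X x)" for x
    using h lim by (auto intro: continuous_on_tendsto_compose)
  have h_meas: "(\<lambda>x. h (Xs n x)) \<in> borel_measurable M" for n
    using borel_measurable_continuous_onI[OF h] Xs by measurable
  show "(\<lambda>n. \<integral>x. h (Xs n x) \<partial>M) \<longlonglongrightarrow> (\<integral>x. h (X x) \<partial>M)"
  proof (rule integral_dominated_convergence[where w = "\<lambda>_. B"])
    show "(\<lambda>x. h (X x)) \<in> borel_measurable M"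
      by (rule borel_measurable_LIMSEQ_real[OF h_lim h_meas])
    show "integrable M (\<lambda>_. B)"
      by (rule integrable_const)
  qed (use h_meas h_lim B in auto)
qed

lemma conv_in_dist_quot_of_binned:
  fixes G :: "nat \<Rightarrow> nat \<Rightarrow> nat \<Rightarrow> real" and \<pi> :: "nat \<Rightarrow> nat \<Rightarrow> nat"
  assumes k: "k \<ge> 1" and \<pi>: "\<forall>n\<ge>1. \<pi> n permutes {..<n}"
    and binned_conv: "conv_in_dist (\<lambda>_. iid_unif) (\<lambda>n. binned k (perm_pad n (\<pi> n) (G n))) iid_unif X"
  shows "conv_in_dist (\<lambda>n. measure_pmf (rand_map k n)) (\<lambda>n f. quot n f (G n)) iid_unif X"
  unfolding conv_in_dist_def
proof (intro allI impI)
  fix h :: "(nat \<Rightarrow> nat \<Rightarrow> real) \<Rightarrow> real"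
  assume h: "continuous_on UNIV h" "bounded (range h)"
  have "(\<integral>T. h (binned k (perm_pad n (\<pi> n) (G n)) T) \<partial>iid_unif) = (\<integral>f. h (quot n f (G n)) \<partial>rand_map k n)"
    if "n \<ge> 1" for n
    using \<pi> that by (intro integral_rand_map_quot[symmetric] k borel_measurable_continuous_onI h(1)) auto
  then have "\<forall>\<^sub>F n in sequentially. (\<integral>T. h (binned k (perm_pad n (\<pi> n) (G n)) T) \<partial>iid_unif) =
      (\<integral>f. h (quot n f (G n)) \<partial>rand_map k n)"
    unfolding eventually_sequentially by blast
  moreover have "(\<lambda>n. \<integral>T. h (binned k (perm_pad n (\<pi> n) (G n)) T) \<partial>iid_unif) \<longlonglongrightarrow> (\<integral>T. h (X T) \<partial>iid_unif)"
    using binned_conv h unfolding conv_in_dist_def by blast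
  ultimately show "(\<lambda>n. \<integral>f. h (quot n f (G n)) \<partial>rand_map k n) \<longlonglongrightarrow> (\<integral>T. h (X T) \<partial>iid_unif)"
    by (rule tendsto_cong[THEN iffD1])
qed

theorem mainTheorem9:
  fixes G :: "nat \<Rightarrow> nat \<Rightarrow> nat \<Rightarrow> real"
    and E :: "nat \<Rightarrow> nat \<Rightarrow> real"
    and \<pi> :: "nat \<Rightarrow> nat \<Rightarrow> nat"
  assumes "\<forall>n\<ge>1. in_simplex n (G n)"
    and "\<forall>i j. 0 \<le> E i j"
    and "\<forall>n\<ge>1. \<pi> n permutes {..<n}"
    and "((\<lambda>n. l1_dist (perm_pad n (\<pi> n) (G n)) E) \<longlongrightarrow> 0) sequentially"
  shows "quot_conv G iid_unif (grapheur E)"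
proof -
  define P where "P n = perm_pad n (\<pi> n) (G n)" for n
  have P_support: "P n i j \<noteq> 0 \<Longrightarrow> i < n \<and> j < n" for n i j
    unfolding P_def by (rule perm_pad_support)
  have P_summable: "(\<lambda>(i,j). P n i j) summable_on UNIV" for n
    by (rule summable_on_finite_support[OF P_support])
  have l1: "(\<lambda>n. l1_dist (P n) E) \<longlonglongrightarrow> 0"
    using assms(4) by (simp add: P_def)
  obtain N where "l1_dist (P N) E \<noteq> \<infinity>"
    using eventually_l1_dist_finite[OF l1] unfolding eventually_sequentially by (metis order_refl)
  then have E_summable: "(\<lambda>(i,j). E i j) summable_on UNIV"
    by (rule summable_on_if_l1_dist_finite[OF P_summable])
  have "conv_in_dist (\<lambda>_. iid_unif) (\<lambda>n. binned k (P n)) iid_unif (\<lambda>T. Gk k (grapheur E T))" for k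
    by (rule conv_in_dist_of_pointwise)
       (simp_all add: prob_space_iid_unif borel_measurable_binned[OF P_support]
         Gk_grapheur[OF E_summable assms(2)] tendsto_binned[OF l1 P_summable E_summable])
  then show ?thesis
    unfolding quot_conv_def P_def using assms(3) by (blast intro: conv_in_dist_quot_of_binned)
qed

end
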